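(* For every $n\ge 4$, the triangular graph $T_n$ is not eigensharp; that is, $N(T_n)\ge n$.
   Context: The triangular graph $T_n$ is the line graph of the complete graph $K_n$ (vertices are the 2-subsets of $\{1,\dots,n\}$, adjacent iff they intersect). A $t$-address is a $t$-tuple with entries in $\{0,a,b\}$ (three distinct symbols). An addressing of length $t$ of a connected graph $G$ is an assignment of $t$-addresses to the vertices such that for any two vertices $u,v$, the graph distance $d(u,v)$ equals the number of coordinates in which one of the two addresses equals $a$ and the other equals $b$. $N(G)$ is the minimum such $t$. With $D(G)$ the distance matrix of $G$ and $n_\pm(D(G))$ its numbers of positive/negative eigenvalues, one always has $N(G)\ge\max(n_+(D(G)),n_-(D(G)))$; $G$ is called eigensharp if equality holds. For $n\ge 4$, $D(T_n)$ has spectrum $(n-1)(n-2)$ (multiplicity 1), $2-n$ (multiplicity $n-1$), and $0$ (multiplicity $\binom n2-n$), so $\max(n_+(D(T_n)),n_-(D(T_n)))=n-1$. *)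

theory Defs
  imports Main "HOL-Library.Extended_Nat"
begin

definition adj_rel :: "'v set \<Rightarrow> ('v \<Rightarrow> 'v \<Rightarrow> bool) \<Rightarrow> ('v \<times> 'v) set" where
  "adj_rel V E = {(x, y). x \<in> V \<and> y \<in> V \<and> E x y}"

definition graph_dist :: "'v set \<Rightarrow> ('v \<Rightarrow> 'v \<Rightarrow> bool) \<Rightarrow> 'v \<Rightarrow> 'v \<Rightarrow> nat" where
  "graph_dist V E u v = (LEAST k. (u, v) \<in> adj_rel V E ^^ k)"

datatype addr_sym = Zero | SymA | SymB

definition addr_dist :: "nat \<Rightarrow> addr_sym list \<Rightarrow> addr_sym list \<Rightarrow> nat" where
  "addr_dist t x y = card {i. i < t \<and> ((x ! i = SymA \<and> y ! i = SymB) \<or> (x ! i = SymB \<and> y ! i = SymA))}"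

definition is_addressing :: "'v set \<Rightarrow> ('v \<Rightarrow> 'v \<Rightarrow> bool) \<Rightarrow> nat \<Rightarrow> ('v \<Rightarrow> addr_sym list) \<Rightarrow> bool" where
  "is_addressing V E t f \<longleftrightarrow>
     (\<forall>v\<in>V. length (f v) = t) \<and>
     (\<forall>u\<in>V. \<forall>v\<in>V. graph_dist V E u v = addr_dist t (f u) (f v))"

text \<open>N(G): minimum length of an addressing (\<infinity> if none existed).\<close>
definition addressing_number :: "'v set \<Rightarrow> ('v \<Rightarrow> 'v \<Rightarrow> bool) \<Rightarrow> enat" where
  "addressing_number V E = (INF t \<in> {t. \<exists>f. is_addressing V E t f}. enat t)"

text \<open>Triangular graph T_n = line graph of K_n.\<close>
definition tri_V :: "nat \<Rightarrow> nat set set" where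
  "tri_V n = {e. e \<subseteq> {1..n} \<and> card e = 2}"

definition tri_E :: "nat set \<Rightarrow> nat set \<Rightarrow> bool" where
  "tri_E u v \<longleftrightarrow> u \<noteq> v \<and> u \<inter> v \<noteq> {}"

end

theory Submission
  imports Defs
begin

text \<open>
  Split an addressing of length \<open>t\<close> of \<open>T\<^sub>n\<close> into coordinates: with \<open>a\<^sub>i\<close>, \<open>b\<^sub>i\<close> the indicator
  vectors of the symbols \<open>a\<close>, \<open>b\<close> in coordinate \<open>i\<close>, the distance matrix \<open>D(u,v) = 2 - |u \<inter> v|\<close>
  is the sum over \<open>i < t\<close> of \<open>a\<^sub>i b\<^sub>i\<^sup>T + b\<^sub>i a\<^sub>i\<^sup>T\<close>. Suppose \<open>t < n\<close> and let \<open>z\<^sub>0\<close> be a kernel vector of \<open>D\<close>.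
  Adding \<open>n - 1\<close> vectors on whose span the form \<open>z\<^sup>T D z\<close> is negative definite gives an
  \<open>n\<close>-dimensional space, which contains a nonzero \<open>z\<close> orthogonal to all \<open>a\<^sub>i\<close>; then \<open>z\<^sup>T D z = 0\<close>,
  forcing \<open>z\<close> to be a multiple of \<open>z\<^sub>0\<close>. So every kernel vector is orthogonal to all \<open>a\<^sub>i\<close> and \<open>b\<^sub>i\<close>.
  For the kernel vectors \<open>e\<^sub>1\<^sub>2 + e\<^sub>3\<^sub>4 - e\<^sub>1\<^sub>3 - e\<^sub>2\<^sub>4\<close> and \<open>e\<^sub>1\<^sub>2 + e\<^sub>3\<^sub>4 - e\<^sub>1\<^sub>4 - e\<^sub>2\<^sub>3\<close> this
  makes every coordinate contribute an even amount to \<open>d(12,13) + d(12,14) + d(13,14) = 3\<close>.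
\<close>

lemma homogeneous_system_has_nontrivial_solution:
  fixes L :: "'i \<Rightarrow> 'j \<Rightarrow> real"
  assumes "finite I" "finite J" "card I < card J"
  shows "\<exists>c. (\<exists>j\<in>J. c j \<noteq> 0) \<and> (\<forall>i\<in>I. (\<Sum>j\<in>J. L i j * c j) = 0)"
  using assms
proof (induction I arbitrary: J L rule: finite_induct)
  case empty
  then obtain j where "j \<in> J" by fastforce
  then show ?case by (intro exI[of _ "\<lambda>_. 1"]) auto
next
  case (insert i I)
  show ?case
  proof (cases "\<forall>j\<in>J. L i j = 0")
    case True
    have "card I < card J" using insert by simp
    with insert.IH[OF insert.prems(1)] obtain c where
      "\<exists>j\<in>J. c j \<noteq> 0" "\<forall>k\<in>I. (\<Sum>j\<in>J. L k j * c j) = 0" by blast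
    with True show ?thesis by (intro exI[of _ c]) auto
  next
    case False
    then obtain j0 where j0: "j0 \<in> J" "L i j0 \<noteq> 0" by auto
    define J' where "J' = J - {j0}"
    \<comment> \<open>Gaussian elimination: clear the column of \<open>j0\<close> using equation \<open>i\<close>.\<close>
    define L' where "L' k j = L k j - L k j0 * L i j / L i j0" for k j
    have "card I < card J'" using insert j0 by (simp add: J'_def)
    with insert.IH[of J' L'] obtain c' where
      c': "\<exists>j\<in>J'. c' j \<noteq> 0" "\<forall>k\<in>I. (\<Sum>j\<in>J'. L' k j * c' j) = 0"
      using insert.prems(1) by (auto simp: J'_def)
    define c where "c j = (if j = j0 then - (\<Sum>j\<in>J'. L i j * c' j) / L i j0 else c' j)" for j
    have split: "(\<Sum>j\<in>J. L k j * c j) = L k j0 * c j0 + (\<Sum>j\<in>J'. L k j * c' j)" for k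
    proof -
      have "(\<Sum>j\<in>J. L k j * c j) = L k j0 * c j0 + (\<Sum>j\<in>J'. L k j * c j)"
        unfolding J'_def using j0 insert.prems(1) by (simp add: sum.remove)
      also have "(\<Sum>j\<in>J'. L k j * c j) = (\<Sum>j\<in>J'. L k j * c' j)"
        by (rule sum.cong) (auto simp: c_def J'_def)
      finally show ?thesis .
    qed
    have "(\<Sum>j\<in>J. L k j * c j) = 0" if "k \<in> insert i I" for k
    proof (cases "k = i")
      case True
      then show ?thesis using split[of k] j0 by (simp add: c_def)
    next
      case False
      have "(\<Sum>j\<in>J'. L' k j * c' j)
          = (\<Sum>j\<in>J'. L k j * c' j) - L k j0 / L i j0 * (\<Sum>j\<in>J'. L i j * c' j)"
        by (simp add: L'_def sum_subtractf sum_distrib_left algebra_simps)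
      with c'(2) False that
      have "(\<Sum>j\<in>J'. L k j * c' j) = L k j0 / L i j0 * (\<Sum>j\<in>J'. L i j * c' j)" by simp
      then show ?thesis using split[of k] j0 by (simp add: c_def)
    qed
    moreover have "\<exists>j\<in>J. c j \<noteq> 0" using c' by (auto simp: c_def J'_def)
    ultimately show ?thesis by blast
  qed
qed

lemma exists_nonzero_combination_orthogonal:
  fixes a :: "'i \<Rightarrow> 'v \<Rightarrow> real" and G :: "'j \<Rightarrow> 'v \<Rightarrow> real"
  assumes "finite I" "finite J" "card I < card J"
  shows "\<exists>c. (\<exists>j\<in>J. c j \<noteq> 0) \<and> (\<forall>i\<in>I. (\<Sum>u\<in>V. a i u * (\<Sum>j\<in>J. c j * G j u)) = 0)"
proof -
  obtain c where c: "\<exists>j\<in>J. c j \<noteq> 0" "\<forall>i\<in>I. (\<Sum>j\<in>J. (\<Sum>u\<in>V. a i u * G j u) * c j) = 0"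
    using homogeneous_system_has_nontrivial_solution[OF assms, of "\<lambda>i j. \<Sum>u\<in>V. a i u * G j u"]
    by blast
  have "(\<Sum>u\<in>V. a i u * (\<Sum>j\<in>J. c j * G j u)) = (\<Sum>j\<in>J. (\<Sum>u\<in>V. a i u * G j u) * c j)" for i
    by (simp add: sum_distrib_left sum_distrib_right mult_ac sum.swap[of _ V])
  with c show ?thesis by auto
qed

lemma quadratic_form_of_symmetrized_products:
  fixes a b :: "'i \<Rightarrow> 'v \<Rightarrow> real"
  shows "(\<Sum>u\<in>V. \<Sum>v\<in>V. z u * z v * (\<Sum>i\<in>I. a i u * b i v + b i u * a i v))
       = 2 * (\<Sum>i\<in>I. (\<Sum>u\<in>V. a i u * z u) * (\<Sum>u\<in>V. b i u * z u))"
proof -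
  have "(\<Sum>u\<in>V. \<Sum>v\<in>V. z u * z v * (\<Sum>i\<in>I. a i u * b i v + b i u * a i v))
      = (\<Sum>u\<in>V. \<Sum>v\<in>V. \<Sum>i\<in>I. (a i u * z u) * (b i v * z v) + (b i u * z u) * (a i v * z v))"
    by (simp add: sum_distrib_left algebra_simps)
  also have "\<dots> = (\<Sum>i\<in>I. \<Sum>u\<in>V. \<Sum>v\<in>V. (a i u * z u) * (b i v * z v) + (b i u * z u) * (a i v * z v))"
    by (rule trans[OF sum.cong[OF refl sum.swap] sum.swap])
  also have "\<dots> = (\<Sum>i\<in>I. 2 * ((\<Sum>u\<in>V. a i u * z u) * (\<Sum>u\<in>V. b i u * z u)))"
  proof (rule sum.cong[OF refl])
    fix i
    have "(\<Sum>u\<in>V. a i u * z u) * (\<Sum>u\<in>V. b i u * z u)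
        = (\<Sum>u\<in>V. \<Sum>v\<in>V. (a i u * z u) * (b i v * z v))"
      by (rule sum_product)
    moreover have "(\<Sum>u\<in>V. b i u * z u) * (\<Sum>u\<in>V. a i u * z u)
        = (\<Sum>u\<in>V. \<Sum>v\<in>V. (b i u * z u) * (a i v * z v))"
      by (rule sum_product)
    ultimately show "(\<Sum>u\<in>V. \<Sum>v\<in>V. (a i u * z u) * (b i v * z v) + (b i u * z u) * (a i v * z v))
        = 2 * ((\<Sum>u\<in>V. a i u * z u) * (\<Sum>u\<in>V. b i u * z u))"
      by (simp add: sum.distrib mult.commute[of "\<Sum>u\<in>V. b i u * z u"])
  qed
  finally show ?thesis by (simp add: sum_distrib_left)
qed

lemma graph_dist_self: "graph_dist V E u u = 0"
  by (simp add: graph_dist_def)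

lemma graph_dist_adjacent:
  assumes "u \<in> V" "v \<in> V" "E u v" "u \<noteq> v"
  shows "graph_dist V E u v = 1"
  unfolding graph_dist_def
proof (rule Least_equality)
  show "(u, v) \<in> adj_rel V E ^^ 1" using assms by (simp add: adj_rel_def)
next
  fix k assume "(u, v) \<in> adj_rel V E ^^ k"
  with assms(4) show "1 \<le> k" by (cases k) auto
qed

lemma graph_dist_common_neighbour:
  assumes "u \<in> V" "v \<in> V" "w \<in> V" "E u w" "E w v" "\<not> E u v" "u \<noteq> v"
  shows "graph_dist V E u v = 2"
  unfolding graph_dist_def
proof (rule Least_equality)
  show "(u, v) \<in> adj_rel V E ^^ 2"
    using assms by (auto simp: adj_rel_def numeral_2_eq_2)
next
  fix k assume k: "(u, v) \<in> adj_rel V E ^^ k"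
  show "2 \<le> k"
  proof (rule ccontr)
    assume "\<not> 2 \<le> k"
    then have "k = 0 \<or> k = 1" by auto
    with k assms(6,7) show False by (auto simp: adj_rel_def)
  qed
qed

lemma tri_V_iff: "u \<in> tri_V n \<longleftrightarrow> u \<subseteq> {1..n} \<and> card u = 2"
  by (auto simp: tri_V_def)

lemma finite_tri_V: "finite (tri_V n)"
  by (rule finite_subset[of _ "Pow {1..n}"]) (auto simp: tri_V_def)

lemma doubleton_in_tri_V: "p \<in> {1..n} \<Longrightarrow> q \<in> {1..n} \<Longrightarrow> p \<noteq> q \<Longrightarrow> {p, q} \<in> tri_V n"
  by (simp add: tri_V_iff)

lemma card_inter_tri_V_le_1:
  assumes "u \<in> tri_V n" "v \<in> tri_V n" "u \<noteq> v"
  shows "card (u \<inter> v) \<le> 1"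
proof -
  have u: "finite u" "card u = 2" and v: "finite v" "card v = 2"
    using assms(1,2) by (auto simp: tri_V_iff intro: card_ge_0_finite)
  have "\<not> u \<subseteq> v"
    using card_subset_eq[OF v(1)] u(2) v(2) assms(3) by metis
  then have "card (u \<inter> v) < card u"
    using psubset_card_mono[OF u(1), of "u \<inter> v"] by blast
  then show ?thesis using u(2) by simp
qed

lemma graph_dist_tri:
  assumes u: "u \<in> tri_V n" and v: "v \<in> tri_V n"
  shows "graph_dist (tri_V n) tri_E u v = 2 - card (u \<inter> v)"
proof (cases "u = v")
  case True
  then show ?thesis using u by (simp add: graph_dist_self tri_V_iff)
next
  case neq: False
  have le1: "card (u \<inter> v) \<le> 1" by (rule card_inter_tri_V_le_1[OF u v neq])
  show ?thesis
  proof (cases "u \<inter> v = {}")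
    case False
    have "finite (u \<inter> v)" using u by (auto simp: tri_V_iff intro: finite_subset)
    with False le1 have "card (u \<inter> v) = 1" by (simp add: le_Suc_eq card_eq_0_iff)
    with u v neq False show ?thesis by (simp add: graph_dist_adjacent tri_E_def)
  next
    case True
    obtain p r where "p \<in> u" "r \<in> v"
      using u v by (metis card.empty ex_in_conv tri_V_iff zero_neq_numeral)
    moreover have "p \<noteq> r" using True \<open>p \<in> u\<close> \<open>r \<in> v\<close> by blast
    ultimately have "{p, r} \<in> tri_V n" "tri_E u {p, r}" "tri_E {p, r} v"
      using u v True by (auto simp: tri_V_iff tri_E_def)
    with u v neq True show ?thesis by (simp add: graph_dist_common_neighbour tri_E_def)
  qed
qed

definition sym_dist :: "addr_sym \<Rightarrow> addr_sym \<Rightarrow> real" where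
  "sym_dist x y = of_bool (x = SymA) * of_bool (y = SymB) + of_bool (x = SymB) * of_bool (y = SymA)"

lemma addr_dist_eq_sum: "real (addr_dist t x y) = (\<Sum>i<t. sym_dist (x ! i) (y ! i))"
proof -
  let ?P = "\<lambda>i. x ! i = SymA \<and> y ! i = SymB \<or> x ! i = SymB \<and> y ! i = SymA"
  have "{i. i < t \<and> ?P i} = {..<t} \<inter> {i. ?P i}" by auto
  then have "real (addr_dist t x y) = (\<Sum>i<t. of_bool (?P i))"
    by (simp only: addr_dist_def sum_of_bool_eq finite_lessThan)
  also have "\<dots> = (\<Sum>i<t. sym_dist (x ! i) (y ! i))"
    by (rule sum.cong) (auto simp: sym_dist_def)
  finally show ?thesis .
qed

lemma addressing_tri_distance_decomposition:
  assumes "is_addressing (tri_V n) tri_E t f" "u \<in> tri_V n" "v \<in> tri_V n"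
  shows "real (2 - card (u \<inter> v)) = (\<Sum>i<t. sym_dist (f u ! i) (f v ! i))"
  using assms by (simp add: is_addressing_def graph_dist_tri[symmetric] addr_dist_eq_sum)

lemma card_inter_eq_sum_incidence:
  assumes "u \<in> tri_V n"
  shows "real (card (u \<inter> v)) = (\<Sum>p\<in>{1..n}. of_bool (p \<in> u) * of_bool (p \<in> v))"
proof -
  have "{1..n} \<inter> u \<inter> v = u \<inter> v" using assms by (auto simp: tri_V_iff)
  then show ?thesis by (simp add: sum_of_bool_eq)
qed

lemma tri_quadratic_form:
  "(\<Sum>u\<in>tri_V n. \<Sum>v\<in>tri_V n. z u * z v * real (2 - card (u \<inter> v)))
   = 2 * (\<Sum>u\<in>tri_V n. z u)\<^sup>2 - (\<Sum>p\<in>{1..n}. (\<Sum>u\<in>tri_V n. of_bool (p \<in> u) * z u)\<^sup>2)"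
proof -
  let ?V = "tri_V n" and ?\<chi> = "\<lambda>p u. of_bool (p \<in> u) :: real"
  have "z u * z v * real (2 - card (u \<inter> v))
      = 2 * (z u * z v) - (\<Sum>p\<in>{1..n}. (?\<chi> p u * z u) * (?\<chi> p v * z v))"
    if "u \<in> ?V" for u v
  proof -
    have "finite u" "card u = 2" using that by (auto simp: tri_V_iff intro: card_ge_0_finite)
    then have "card (u \<inter> v) \<le> 2" using card_mono[of u "u \<inter> v"] by auto
    then have "real (2 - card (u \<inter> v)) = 2 - (\<Sum>p\<in>{1..n}. ?\<chi> p u * ?\<chi> p v)"
      using card_inter_eq_sum_incidence[OF that, of v] by (simp add: of_nat_diff)
    then show ?thesis by (simp only: right_diff_distrib sum_distrib_left mult_ac)
  qed
  then have "(\<Sum>u\<in>?V. \<Sum>v\<in>?V. z u * z v * real (2 - card (u \<inter> v)))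
      = (\<Sum>u\<in>?V. \<Sum>v\<in>?V. 2 * (z u * z v))
        - (\<Sum>u\<in>?V. \<Sum>v\<in>?V. \<Sum>p\<in>{1..n}. (?\<chi> p u * z u) * (?\<chi> p v * z v))"
    by (simp add: sum_subtractf)
  also have "(\<Sum>u\<in>?V. \<Sum>v\<in>?V. \<Sum>p\<in>{1..n}. (?\<chi> p u * z u) * (?\<chi> p v * z v))
      = (\<Sum>p\<in>{1..n}. \<Sum>u\<in>?V. \<Sum>v\<in>?V. (?\<chi> p u * z u) * (?\<chi> p v * z v))"
    by (rule trans[OF sum.cong[OF refl sum.swap] sum.swap])
  also have "(\<Sum>u\<in>?V. \<Sum>v\<in>?V. 2 * (z u * z v)) = 2 * (\<Sum>u\<in>?V. z u)\<^sup>2"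
    unfolding power2_eq_square sum_product by (simp add: sum_distrib_left)
  also have "(\<Sum>p\<in>{1..n}. \<Sum>u\<in>?V. \<Sum>v\<in>?V. (?\<chi> p u * z u) * (?\<chi> p v * z v))
      = (\<Sum>p\<in>{1..n}. (\<Sum>u\<in>?V. ?\<chi> p u * z u)\<^sup>2)"
    by (simp add: power2_eq_square sum_product)
  finally show ?thesis .
qed

lemma tri_isotropic_incidence_sums_vanish:
  assumes "(\<Sum>u\<in>tri_V n. \<Sum>v\<in>tri_V n. z u * z v * real (2 - card (u \<inter> v))) = 0"
    and "(\<Sum>u\<in>tri_V n. z u) = 0" and "p \<in> {1..n}"
  shows "(\<Sum>u\<in>tri_V n. of_bool (p \<in> u) * z u) = 0"
proof -
  have "(\<Sum>q\<in>{1..n}. (\<Sum>u\<in>tri_V n. of_bool (q \<in> u) * z u)\<^sup>2) = 0"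
    using assms(1,2) by (simp add: tri_quadratic_form)
  with assms(3) show ?thesis by (simp add: sum_nonneg_eq_0_iff)
qed

lemma shift_vector_sums:
  assumes "j \<in> {1..n}" "k \<in> {1..n}" "j \<noteq> 1" "k \<noteq> 1" "j \<noteq> k"
  shows "(\<Sum>u\<in>tri_V n. of_bool (u = {j, k}) - of_bool (u = {1, k}) :: real) = 0"
    and "p \<noteq> 1 \<Longrightarrow> (\<Sum>u\<in>tri_V n. of_bool (p \<in> u) * (of_bool (u = {j, k}) - of_bool (u = {1, k})))
                      = (of_bool (p = j) :: real)"
proof -
  have V: "{j, k} \<in> tri_V n" "{1, k} \<in> tri_V n"
    using assms by (auto intro: doubleton_in_tri_V)
  then show "(\<Sum>u\<in>tri_V n. of_bool (u = {j, k}) - of_bool (u = {1, k}) :: real) = 0"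
    by (simp add: sum_subtractf finite_tri_V)
  show "(\<Sum>u\<in>tri_V n. of_bool (p \<in> u) * (of_bool (u = {j, k}) - of_bool (u = {1, k})))
         = (of_bool (p = j) :: real)" if "p \<noteq> 1"
    using V that assms(5)
    by (cases "p = k") (simp_all add: right_diff_distrib sum_subtractf finite_tri_V)
qed

definition tri_test_vector :: "(nat set \<Rightarrow> real) \<Rightarrow> nat \<Rightarrow> nat set \<Rightarrow> real" where
  "tri_test_vector z0 j u =
     (if j = 1 then z0 u
      else let k = if j = 2 then 3 else 2 in of_bool (u = {j, k}) - of_bool (u = {1, k}))"

lemma tri_test_vector_combination_sums:
  fixes c :: "nat \<Rightarrow> real"
  assumes "n \<ge> 3"
    and z0_sum: "(\<Sum>u\<in>tri_V n. z0 u) = 0"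
    and z0_incidence: "\<forall>p\<in>{1..n}. (\<Sum>u\<in>tri_V n. of_bool (p \<in> u) * z0 u) = 0"
  defines "z u \<equiv> \<Sum>j\<in>{1..n}. c j * tri_test_vector z0 j u"
  shows "(\<Sum>u\<in>tri_V n. z u) = 0"
    and "p \<in> {2..n} \<Longrightarrow> (\<Sum>u\<in>tri_V n. of_bool (p \<in> u) * z u) = c p"
proof -
  let ?V = "tri_V n" and ?G = "tri_test_vector z0"
  have shift: "j \<in> {1..n}" "k \<in> {1..n}" "j \<noteq> 1" "k \<noteq> 1" "j \<noteq> k"
    if "j \<in> {2..n}" "k = (if j = 2 then 3 else 2)" for j k
    using that assms(1) by auto
  have "(\<Sum>u\<in>?V. ?G j u) = 0" if "j \<in> {1..n}" for j
  proof (cases "j = 1")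
    case False
    with that have "j \<in> {2..n}" by auto
    from shift_vector_sums(1)[OF shift[OF this refl]] False
    show ?thesis by (simp add: tri_test_vector_def Let_def)
  qed (simp add: tri_test_vector_def z0_sum)
  moreover have "(\<Sum>u\<in>?V. z u) = (\<Sum>j\<in>{1..n}. c j * (\<Sum>u\<in>?V. ?G j u))"
    unfolding z_def sum_distrib_left by (rule sum.swap)
  ultimately show "(\<Sum>u\<in>?V. z u) = 0" by simp
  assume p: "p \<in> {2..n}"
  have "(\<Sum>u\<in>?V. of_bool (p \<in> u) * ?G j u) = of_bool (p = j)" if "j \<in> {1..n}" for j
  proof (cases "j = 1")
    case True
    with p z0_incidence show ?thesis by (simp add: tri_test_vector_def)
  next
    case False
    with that have "j \<in> {2..n}" by auto
    from shift_vector_sums(2)[OF shift[OF this refl], of p] False p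
    show ?thesis by (simp add: tri_test_vector_def Let_def)
  qed
  moreover have "(\<Sum>u\<in>?V. of_bool (p \<in> u) * z u)
      = (\<Sum>j\<in>{1..n}. c j * (\<Sum>u\<in>?V. of_bool (p \<in> u) * ?G j u))"
    unfolding z_def sum_distrib_left by (subst sum.swap) (simp add: mult.left_commute)
  ultimately have "(\<Sum>u\<in>?V. of_bool (p \<in> u) * z u) = (\<Sum>j\<in>{1..n}. c j * of_bool (p = j))"
    by simp
  also have "\<dots> = c p" using p by simp
  finally show "(\<Sum>u\<in>?V. of_bool (p \<in> u) * z u) = c p" .
qed

lemma tri_kernel_vector_orthogonal:
  fixes a b :: "'i \<Rightarrow> nat set \<Rightarrow> real" and z0 :: "nat set \<Rightarrow> real"
  assumes "n \<ge> 3" "finite I" "card I < n"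
    and D: "\<forall>u\<in>tri_V n. \<forall>v\<in>tri_V n.
              real (2 - card (u \<inter> v)) = (\<Sum>i\<in>I. a i u * b i v + b i u * a i v)"
    and z0_sum: "(\<Sum>u\<in>tri_V n. z0 u) = 0"
    and z0_incidence: "\<forall>p\<in>{1..n}. (\<Sum>u\<in>tri_V n. of_bool (p \<in> u) * z0 u) = 0"
    and "i \<in> I"
  shows "(\<Sum>u\<in>tri_V n. a i u * z0 u) = 0"
proof -
  let ?V = "tri_V n" and ?G = "tri_test_vector z0"
  obtain c where c_nonzero: "\<exists>j\<in>{1..n}. c j \<noteq> 0"
    and orth: "\<forall>i\<in>I. (\<Sum>u\<in>?V. a i u * (\<Sum>j\<in>{1..n}. c j * ?G j u)) = 0"
    using exists_nonzero_combination_orthogonal[where V = ?V and a = a and G = ?G and J = "{1..n}",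
        OF assms(2) finite_atLeastAtMost] assms(3) by auto
  define z where "z u = (\<Sum>j\<in>{1..n}. c j * ?G j u)" for u
  note z_sums = tri_test_vector_combination_sums[where c = c, OF assms(1) z0_sum z0_incidence,
      folded z_def]
  have orth_z: "(\<Sum>u\<in>?V. a i u * z u) = 0" if "i \<in> I" for i
    using orth that by (simp add: z_def)
  have "(\<Sum>u\<in>?V. \<Sum>v\<in>?V. z u * z v * real (2 - card (u \<inter> v)))
      = (\<Sum>u\<in>?V. \<Sum>v\<in>?V. z u * z v * (\<Sum>i\<in>I. a i u * b i v + b i u * a i v))"
    using D by (intro sum.cong refl) simp
  also have "\<dots> = 2 * (\<Sum>i\<in>I. (\<Sum>u\<in>?V. a i u * z u) * (\<Sum>u\<in>?V. b i u * z u))"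
    by (rule quadratic_form_of_symmetrized_products)
  finally have isotropic: "(\<Sum>u\<in>?V. \<Sum>v\<in>?V. z u * z v * real (2 - card (u \<inter> v))) = 0"
    by (simp add: orth_z)
  have c_vanish: "c p = 0" if "p \<in> {2..n}" for p
    using tri_isotropic_incidence_sums_vanish[OF isotropic z_sums(1), of p] z_sums(2)[OF that] that
    by simp
  have "c 1 \<noteq> 0"
  proof
    assume "c 1 = 0"
    with c_vanish have "c j = 0" if "j \<in> {1..n}" for j
      using that by (cases "j = 1") auto
    with c_nonzero show False by blast
  qed
  moreover have z_eq: "z u = c 1 * z0 u" for u
  proof -
    have "z u = (\<Sum>j\<in>{1..n}. if j = 1 then c 1 * z0 u else 0)"
      unfolding z_def using c_vanish by (intro sum.cong refl) (auto simp: tri_test_vector_def)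
    then show ?thesis using assms(1) by simp
  qed
  moreover have "(\<Sum>u\<in>?V. a i u * z u) = c 1 * (\<Sum>u\<in>?V. a i u * z0 u)"
    by (simp add: z_eq sum_distrib_left mult.left_commute)
  ultimately show ?thesis using orth_z[OF \<open>i \<in> I\<close>] by simp
qed

lemma four_cycle_vector_sums:
  assumes "{p, q} \<in> tri_V n" "{r, s} \<in> tri_V n" "{p, r} \<in> tri_V n" "{q, s} \<in> tri_V n"
  shows "(\<Sum>u\<in>tri_V n. h u * (of_bool (u = {p, q}) + of_bool (u = {r, s})
                                 - of_bool (u = {p, r}) - of_bool (u = {q, s})))
         = (h {p, q} + h {r, s} - h {p, r} - h {q, s} :: real)"
  using assms by (simp add: finite_tri_V algebra_simps sum.distrib sum_subtractf)

lemma addressing_four_cycle_balance: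
  assumes "n \<ge> 3" "is_addressing (tri_V n) tri_E t f" "t < n" "i < t" "\<sigma> \<in> {SymA, SymB}"
    and "p \<in> {1..n}" "q \<in> {1..n}" "r \<in> {1..n}" "s \<in> {1..n}" "distinct [p, q, r, s]"
  shows "of_bool (f {p, q} ! i = \<sigma>) + of_bool (f {r, s} ! i = \<sigma>)
       = (of_bool (f {p, r} ! i = \<sigma>) + of_bool (f {q, s} ! i = \<sigma>) :: real)"
proof -
  let ?V = "tri_V n"
  define w :: "nat set \<Rightarrow> real" where
    "w u = of_bool (u = {p, q}) + of_bool (u = {r, s}) - of_bool (u = {p, r}) - of_bool (u = {q, s})" for u
  have V: "{p, q} \<in> ?V" "{r, s} \<in> ?V" "{p, r} \<in> ?V" "{q, s} \<in> ?V"
    using assms(6-10) by (auto intro: doubleton_in_tri_V)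
  note w_sums = four_cycle_vector_sums[OF V, folded w_def]
  have w_sum: "(\<Sum>u\<in>?V. w u) = 0"
    using w_sums[of "\<lambda>_. 1"] by simp
  have w_incidence: "\<forall>x\<in>{1..n}. (\<Sum>u\<in>?V. of_bool (x \<in> u) * w u) = 0"
    using w_sums assms(10) by auto
  define ind :: "addr_sym \<Rightarrow> nat \<Rightarrow> nat set \<Rightarrow> real" where "ind \<tau> j u = of_bool (f u ! j = \<tau>)" for \<tau> j u
  obtain \<tau> where \<tau>: "{\<sigma>, \<tau>} = {SymA, SymB}" using assms(5) by auto
  have "\<forall>u\<in>?V. \<forall>v\<in>?V.
          real (2 - card (u \<inter> v)) = (\<Sum>j<t. ind \<sigma> j u * ind \<tau> j v + ind \<tau> j u * ind \<sigma> j v)"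
    using addressing_tri_distance_decomposition[OF assms(2)] \<tau>
    by (auto simp: sym_dist_def ind_def doubleton_eq_iff add.commute intro!: sum.cong)
  then have "(\<Sum>u\<in>?V. ind \<sigma> i u * w u) = 0"
    using tri_kernel_vector_orthogonal[where a = "ind \<sigma>" and b = "ind \<tau>",
        OF assms(1) finite_lessThan _ _ w_sum w_incidence] assms(3,4) by simp
  with w_sums[of "ind \<sigma> i"] show ?thesis by (simp add: ind_def)
qed

lemma sym_dist_triangle_even:
  assumes "\<forall>\<sigma>\<in>{SymA, SymB}.
             of_bool (x12 = \<sigma>) + of_bool (x34 = \<sigma>) = (of_bool (x13 = \<sigma>) + of_bool (x24 = \<sigma>) :: real)
           \<and> of_bool (x12 = \<sigma>) + of_bool (x34 = \<sigma>) = (of_bool (x14 = \<sigma>) + of_bool (x23 = \<sigma>) :: real)"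
  shows "sym_dist x12 x13 + sym_dist x12 x14 + sym_dist x13 x14 \<in> {0, 2}"
  using assms
  by (cases x12; cases x13; cases x14; cases x23; cases x24; cases x34) (simp_all add: sym_dist_def)

lemma sum_of_zeros_and_twos_neq_3:
  fixes x :: "'i \<Rightarrow> real"
  assumes "\<forall>i\<in>I. x i \<in> {0, 2}"
  shows "sum x I \<noteq> 3"
proof
  define m where "m i = (if x i = 0 then 0 else 2 :: nat)" for i
  have "sum x I = real (sum m I)"
    unfolding of_nat_sum using assms by (intro sum.cong refl) (auto simp: m_def)
  moreover assume "sum x I = 3"
  ultimately have "sum m I = 3" by (metis of_nat_eq_iff of_nat_numeral)
  moreover have "even (sum m I)" by (rule dvd_sum) (simp add: m_def)
  ultimately show False by simp
qed

lemma tri_addressing_length_ge: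
  assumes "n \<ge> 4" and f: "is_addressing (tri_V n) tri_E t f"
  shows "n \<le> t"
proof (rule ccontr)
  assume "\<not> n \<le> t"
  then have "t < n" by simp
  let ?d = "\<lambda>i u v. sym_dist (f u ! i) (f v ! i)"
  have dist_1: "(\<Sum>i<t. ?d i {1, p} {1, q}) = 1" if "p \<in> {2..n}" "q \<in> {2..n}" "p \<noteq> q" for p q
  proof -
    have "{1, p} \<in> tri_V n" "{1, q} \<in> tri_V n" using that by (auto intro!: doubleton_in_tri_V)
    moreover have "{1, p} \<inter> {1, q} = {1}" using that by auto
    ultimately show ?thesis using addressing_tri_distance_decomposition[OF f, of "{1, p}" "{1, q}"] that(3)
      by simp
  qed
  have "(\<Sum>i<t. ?d i {1, 2} {1, 3} + ?d i {1, 2} {1, 4} + ?d i {1, 3} {1, 4}) = 3"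
    using dist_1[of 2 3] dist_1[of 2 4] dist_1[of 3 4] assms(1) by (simp add: sum.distrib)
  moreover have "?d i {1, 2} {1, 3} + ?d i {1, 2} {1, 4} + ?d i {1, 3} {1, 4} \<in> {0, 2}"
    if "i \<in> {..<t}" for i
  proof (rule sym_dist_triangle_even, intro ballI conjI)
    fix \<sigma> :: addr_sym assume "\<sigma> \<in> {SymA, SymB}"
    note balance = addressing_four_cycle_balance[OF _ f \<open>t < n\<close> that[simplified] this]
    show "of_bool (f {1, 2} ! i = \<sigma>) + of_bool (f {3, 4} ! i = \<sigma>)
        = (of_bool (f {1, 3} ! i = \<sigma>) + of_bool (f {2, 4} ! i = \<sigma>) :: real)"
      using balance[of 1 2 3 4] assms(1) by simp
    show "of_bool (f {1, 2} ! i = \<sigma>) + of_bool (f {3, 4} ! i = \<sigma>)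
        = (of_bool (f {1, 4} ! i = \<sigma>) + of_bool (f {2, 3} ! i = \<sigma>) :: real)"
      using balance[of 1 2 4 3] assms(1) by (simp add: insert_commute)
  qed
  ultimately show False
    using sum_of_zeros_and_twos_neq_3[of "{..<t}" "\<lambda>i. ?d i {1, 2} {1, 3} + ?d i {1, 2} {1, 4} + ?d i {1, 3} {1, 4}"]
    by simp
qed

theorem theorem17:
  fixes n :: nat
  assumes "n \<ge> 4"
  shows "enat n \<le> addressing_number (tri_V n) tri_E"
  unfolding addressing_number_def
  using tri_addressing_length_ge[OF assms] by (auto intro!: INF_greatest)

end
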